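(* Let $\alpha \in (0,\frac{\pi}{2})$ and $\beta \in [0,\alpha]$. Then for all $\theta \in [1,\frac{\pi}{2\alpha})$, \[\Big| \frac{\sin(2\beta)}{\sin(2\alpha)} - \frac{\sin(2\theta\beta)}{\sin(2\theta\alpha)} \Big| \leq \frac{4(\theta-1)\alpha}{\sin(2\alpha)\sin(2\theta\alpha)}.\] *)

theory Defs
  imports Complex_Main
begin

end

theory Submission
  imports Defs
begin

text \<open>Over the common denominator \<open>sin (2\<alpha>) sin (2\<theta>\<alpha>)\<close> the numerator is
  \<open>sin (2\<beta>) (sin (2\<theta>\<alpha>) - sin (2\<alpha>)) + sin (2\<alpha>) (sin (2\<beta>) - sin (2\<theta>\<beta>))\<close>.
  Since \<open>sin\<close> is 1-Lipschitz and bounded by 1, and \<open>\<beta> \<le> \<alpha>\<close>, each summand is at most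
  \<open>2 (\<theta> - 1) \<alpha>\<close>.\<close>

lemma abs_sin_diff_le: "\<bar>sin x - sin y\<bar> \<le> \<bar>x - y\<bar>" for x y :: real
proof -
  have "\<bar>sin x - sin y\<bar> = 2 * \<bar>sin ((x - y) / 2)\<bar> * \<bar>cos ((x + y) / 2)\<bar>"
    by (simp add: sin_diff_sin abs_mult)
  also have "\<dots> \<le> 2 * \<bar>(x - y) / 2\<bar> * 1"
    by (intro mult_mono abs_sin_x_le_abs_x) auto
  finally show ?thesis by simp
qed

lemma abs_diff_divide_le:
  fixes a b c d :: real
  assumes "0 < b" "0 < d" "\<bar>a\<bar> \<le> 1" "b \<le> 1"
  shows "\<bar>a / b - c / d\<bar> \<le> (\<bar>d - b\<bar> + \<bar>a - c\<bar>) / (b * d)"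
proof -
  have "\<bar>a / b - c / d\<bar> = \<bar>a * (d - b) + b * (a - c)\<bar> / (b * d)"
    using assms by (simp add: field_simps abs_divide abs_mult)
  also have "\<bar>a * (d - b) + b * (a - c)\<bar> \<le> \<bar>d - b\<bar> + \<bar>a - c\<bar>"
  proof -
    have "\<bar>a * (d - b)\<bar> \<le> \<bar>d - b\<bar>" "\<bar>b * (a - c)\<bar> \<le> \<bar>a - c\<bar>"
      using assms by (auto simp: abs_mult intro: mult_left_le_one_le)
    then show ?thesis
      using abs_triangle_ineq[of "a * (d - b)" "b * (a - c)"] by linarith
  qed
  then have "\<bar>a * (d - b) + b * (a - c)\<bar> / (b * d) \<le> (\<bar>d - b\<bar> + \<bar>a - c\<bar>) / (b * d)"
    using assms by (intro divide_right_mono) auto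
  finally show ?thesis .
qed

theorem propositionB3:
  fixes \<alpha> \<beta> \<theta> :: real
  assumes "0 < \<alpha>" and "\<alpha> < pi / 2"
    and "0 \<le> \<beta>" and "\<beta> \<le> \<alpha>"
    and "1 \<le> \<theta>" and "\<theta> < pi / (2 * \<alpha>)"
  shows "\<bar>sin (2 * \<beta>) / sin (2 * \<alpha>) - sin (2 * \<theta> * \<beta>) / sin (2 * \<theta> * \<alpha>)\<bar>
           \<le> 4 * (\<theta> - 1) * \<alpha> / (sin (2 * \<alpha>) * sin (2 * \<theta> * \<alpha>))"
proof -
  have "2 * \<theta> * \<alpha> < pi" using assms(1,6) by (simp add: field_simps)
  then have pos: "0 < sin (2 * \<alpha>)" "0 < sin (2 * \<theta> * \<alpha>)"
    using assms(1,2,5) by (auto intro!: sin_gt_zero)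
  have "\<bar>sin (2 * \<theta> * \<alpha>) - sin (2 * \<alpha>)\<bar> \<le> 2 * (\<theta> - 1) * \<alpha>"
    using abs_sin_diff_le[of "2 * \<theta> * \<alpha>" "2 * \<alpha>"] assms(1,5)
    by (simp add: algebra_simps)
  moreover have "\<bar>sin (2 * \<beta>) - sin (2 * \<theta> * \<beta>)\<bar> \<le> 2 * (\<theta> - 1) * \<alpha>"
  proof -
    have "2 * \<beta> - 2 * \<theta> * \<beta> = - (2 * (\<theta> - 1) * \<beta>)"
      by (simp add: algebra_simps)
    moreover have "0 \<le> 2 * (\<theta> - 1) * \<beta>"
      using assms(3,5) by simp
    ultimately have "\<bar>2 * \<beta> - 2 * \<theta> * \<beta>\<bar> = 2 * (\<theta> - 1) * \<beta>"
      by simp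
    also have "\<dots> \<le> 2 * (\<theta> - 1) * \<alpha>"
      using assms(4,5) by (intro mult_left_mono) auto
    finally show ?thesis using abs_sin_diff_le order_trans by blast
  qed
  ultimately have "\<bar>sin (2 * \<theta> * \<alpha>) - sin (2 * \<alpha>)\<bar> + \<bar>sin (2 * \<beta>) - sin (2 * \<theta> * \<beta>)\<bar>
      \<le> 4 * (\<theta> - 1) * \<alpha>"
    by linarith
  with pos have "(\<bar>sin (2 * \<theta> * \<alpha>) - sin (2 * \<alpha>)\<bar> + \<bar>sin (2 * \<beta>) - sin (2 * \<theta> * \<beta>)\<bar>)
      / (sin (2 * \<alpha>) * sin (2 * \<theta> * \<alpha>)) \<le> 4 * (\<theta> - 1) * \<alpha> / (sin (2 * \<alpha>) * sin (2 * \<theta> * \<alpha>))"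
    by (intro divide_right_mono) auto
  then show ?thesis
    using abs_diff_divide_le[OF pos abs_sin_le_one sin_le_one] order_trans by blast
qed

end
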